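(* Let $G$ be a graph and $k\ge2$. The following are equivalent: (a1) $M_k(G)$ is a non-trivial matroid and $G$ is a cacti-graph; (a2) $M_k(G)$ is a connected matroid.
   Context: Graphs are finite, may have loops and parallel edges, and have no isolated vertices. A leaf is a vertex incident to exactly one edge, which is not a loop. A cacti-graph is a graph with no isolated vertices, no leaves, and no component that is a cycle (equivalently every component has at least two cycles). For $X\subseteq E(G)$, $G\langle X\rangle$ is the subgraph with edge set $X$ and vertex set the vertices incident to $X$. For $k\ge0$, $M_k(G)$ is the matroid on $E(G)$ whose circuits are the inclusion-minimal members of $\{C\subseteq E(G):C\neq\emptyset,\ |C|=|V(G\langle C\rangle)|+k\}$. A matroid is non-trivial if it has at least one circuit and at least one cocircuit; it is connected if its ground set has at least two elements and every two elements lie in a common circuit. *)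

theory Defs
  imports Main
begin

text \<open>A (multi)graph is given by a finite edge set E and an incidence map inc:
  each edge is incident to one vertex (a loop) or two vertices. The vertex set is
  the set of vertices incident to edges, so there are no isolated vertices.\<close>

definition graph :: "'e set \<Rightarrow> ('e \<Rightarrow> 'v set) \<Rightarrow> bool" where
  "graph E inc \<longleftrightarrow> finite E \<and> (\<forall>e\<in>E. card (inc e) = 1 \<or> card (inc e) = 2)"

definition verts :: "('e \<Rightarrow> 'v set) \<Rightarrow> 'e set \<Rightarrow> 'v set" where
  "verts inc X = \<Union> (inc ` X)"

definition is_loop :: "('e \<Rightarrow> 'v set) \<Rightarrow> 'e \<Rightarrow> bool" where
  "is_loop inc e \<longleftrightarrow> card (inc e) = 1"

definition degree :: "'e set \<Rightarrow> ('e \<Rightarrow> 'v set) \<Rightarrow> 'v \<Rightarrow> nat" where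
  "degree F inc v = card {e\<in>F. v \<in> inc e \<and> \<not> is_loop inc e}
                    + 2 * card {e\<in>F. v \<in> inc e \<and> is_loop inc e}"

definition is_leaf :: "'e set \<Rightarrow> ('e \<Rightarrow> 'v set) \<Rightarrow> 'v \<Rightarrow> bool" where
  "is_leaf E inc v \<longleftrightarrow> (\<exists>e\<in>E. {f\<in>E. v \<in> inc f} = {e} \<and> \<not> is_loop inc e)"

definition edge_connected :: "('e \<Rightarrow> 'v set) \<Rightarrow> 'e set \<Rightarrow> bool" where
  "edge_connected inc F \<longleftrightarrow> F \<noteq> {} \<and>
     (\<forall>e\<in>F. \<forall>f\<in>F. (e, f) \<in> {(a, b). a \<in> F \<and> b \<in> F \<and> inc a \<inter> inc b \<noteq> {}}\<^sup>*)"

definition is_component :: "'e set \<Rightarrow> ('e \<Rightarrow> 'v set) \<Rightarrow> 'e set \<Rightarrow> bool" where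
  "is_component E inc F \<longleftrightarrow> F \<subseteq> E \<and> edge_connected inc F \<and>
     (\<forall>e\<in>E - F. inc e \<inter> verts inc F = {})"

definition is_cycle_graph :: "('e \<Rightarrow> 'v set) \<Rightarrow> 'e set \<Rightarrow> bool" where
  "is_cycle_graph inc F \<longleftrightarrow> edge_connected inc F \<and> (\<forall>v\<in>verts inc F. degree F inc v = 2)"

definition cacti_graph :: "'e set \<Rightarrow> ('e \<Rightarrow> 'v set) \<Rightarrow> bool" where
  "cacti_graph E inc \<longleftrightarrow>
     (\<forall>v\<in>verts inc E. \<not> is_leaf E inc v) \<and>
     (\<forall>F. is_component E inc F \<longrightarrow> \<not> is_cycle_graph inc F)"

definition Mk_circuits :: "nat \<Rightarrow> 'e set \<Rightarrow> ('e \<Rightarrow> 'v set) \<Rightarrow> 'e set set" where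
  "Mk_circuits k E inc =
     {C. C \<subseteq> E \<and> C \<noteq> {} \<and> card C = card (verts inc C) + k \<and>
         (\<forall>D. D \<subset> C \<longrightarrow> \<not> (D \<noteq> {} \<and> card D = card (verts inc D) + k))}"

definition matroid_circuits :: "'e set \<Rightarrow> 'e set set \<Rightarrow> bool" where
  "matroid_circuits S \<C> \<longleftrightarrow> finite S \<and> (\<forall>C\<in>\<C>. C \<subseteq> S) \<and> {} \<notin> \<C> \<and>
     (\<forall>C1\<in>\<C>. \<forall>C2\<in>\<C>. C1 \<subseteq> C2 \<longrightarrow> C1 = C2) \<and>
     (\<forall>C1\<in>\<C>. \<forall>C2\<in>\<C>. \<forall>e. C1 \<noteq> C2 \<and> e \<in> C1 \<inter> C2 \<longrightarrow>
        (\<exists>C3\<in>\<C>. C3 \<subseteq> (C1 \<union> C2) - {e}))"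

definition m_indep :: "'e set \<Rightarrow> 'e set set \<Rightarrow> 'e set \<Rightarrow> bool" where
  "m_indep S \<C> X \<longleftrightarrow> X \<subseteq> S \<and> (\<forall>C\<in>\<C>. \<not> C \<subseteq> X)"

definition m_basis :: "'e set \<Rightarrow> 'e set set \<Rightarrow> 'e set \<Rightarrow> bool" where
  "m_basis S \<C> B \<longleftrightarrow> m_indep S \<C> B \<and> (\<forall>X. B \<subset> X \<longrightarrow> \<not> m_indep S \<C> X)"

definition m_cocircuit :: "'e set \<Rightarrow> 'e set set \<Rightarrow> 'e set \<Rightarrow> bool" where
  "m_cocircuit S \<C> D \<longleftrightarrow> D \<subseteq> S \<and> D \<noteq> {} \<and> (\<forall>B. m_basis S \<C> B \<longrightarrow> D \<inter> B \<noteq> {}) \<and>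
     (\<forall>D'. D' \<subset> D \<longrightarrow> (\<exists>B. m_basis S \<C> B \<and> D' \<inter> B = {}))"

definition nontrivial_matroid :: "'e set \<Rightarrow> 'e set set \<Rightarrow> bool" where
  "nontrivial_matroid S \<C> \<longleftrightarrow> matroid_circuits S \<C> \<and> \<C> \<noteq> {} \<and> (\<exists>D. m_cocircuit S \<C> D)"

definition connected_matroid :: "'e set \<Rightarrow> 'e set set \<Rightarrow> bool" where
  "connected_matroid S \<C> \<longleftrightarrow> matroid_circuits S \<C> \<and> 2 \<le> card S \<and>
     (\<forall>x\<in>S. \<forall>y\<in>S. x \<noteq> y \<longrightarrow> (\<exists>C\<in>\<C>. x \<in> C \<and> y \<in> C))"

end

theory Submission
  imports Defs
begin

text \<open>Write \<open>ex X = |X| - |V(G\<langle>X\<rangle>)|\<close>. This excess is supermodular, drops by at most one when an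
  edge is deleted, and the circuits of \<open>M\<^sub>k(G)\<close> are the minimal nonempty edge sets of excess \<open>k\<close>.
  For such a function, if \<open>A\<close> is rigid (every proper subset has smaller excess) and
  \<open>ex A \<ge> k \<ge> 2\<close>, any two elements \<open>x, y\<close> of \<open>A\<close> lie in a common circuit: rigid maximisers of
  the excess inside \<open>A - {x}\<close> and \<open>A - {y}\<close> must share an element \<open>z\<close> by supermodularity, and a
  rigid maximiser inside \<open>A - {z}\<close> contains both \<open>x\<close> and \<open>y\<close> and has excess \<open>ex A - 1 \<ge> k\<close>,
  so induction applies.

  In a cacti-graph the whole edge set is rigid: if deleting the edges outside \<open>Y\<close> does not lower
  the excess, double counting of edge ends at the vertices that disappear shows that these
  vertices have degree 2 and carry a union of components, hence a cycle component. Conversely,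
  in a connected \<open>M\<^sub>k(G)\<close> every edge lies in a circuit, and a circuit through a leaf edge or
  through a cycle component would have a proper part of excess \<open>k\<close>. Nontriviality is
  automatic since single edges have excess at most 1 and so are never circuits.\<close>

locale unit_supermodular =
  fixes S :: "'a set" and f :: "'a set \<Rightarrow> int"
  assumes finite_ground: "finite S"
    and empty_eq_0: "f {} = 0"
    and supermodular: "A \<subseteq> S \<Longrightarrow> B \<subseteq> S \<Longrightarrow> f A + f B \<le> f (A \<union> B) + f (A \<inter> B)"
    and remove_le: "X \<subseteq> S \<Longrightarrow> z \<in> X \<Longrightarrow> f X \<le> f (X - {z}) + 1"
begin

definition rigid :: "'a set \<Rightarrow> bool" where
  "rigid X \<longleftrightarrow> (\<forall>Y. Y \<subset> X \<longrightarrow> f Y < f X)"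

definition level_circuit :: "int \<Rightarrow> 'a set \<Rightarrow> bool" where
  "level_circuit k C \<longleftrightarrow>
     C \<subseteq> S \<and> C \<noteq> {} \<and> f C = k \<and> (\<forall>D. D \<subset> C \<longrightarrow> D \<noteq> {} \<longrightarrow> f D \<noteq> k)"

definition rigid_maximiser :: "'a set \<Rightarrow> 'a set \<Rightarrow> bool" where
  "rigid_maximiser X C \<longleftrightarrow> C \<subseteq> X \<and> (\<forall>Y\<subseteq>X. f Y \<le> f C) \<and> rigid C"

lemma finite_subset_ground: "X \<subseteq> S \<Longrightarrow> finite X"
  using finite_ground finite_subset by blast

lemma singleton_le_1: "x \<in> S \<Longrightarrow> f {x} \<le> 1"
  using remove_le[of "{x}" x] empty_eq_0 by simp

lemma rigid_le:
  assumes "rigid A" "Y \<subseteq> A"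
  shows "f Y \<le> f A"
proof (cases "Y = A")
  case False
  with assms show ?thesis
    unfolding rigid_def by (simp add: psubset_eq less_imp_le)
qed simp

lemma intermediate_value:
  assumes "W \<subseteq> X" "X \<subseteq> S" "f W \<le> K" "K \<le> f X"
  shows "\<exists>Y. W \<subseteq> Y \<and> Y \<subseteq> X \<and> f Y = K"
  using assms
proof (induction "card (X - W)" arbitrary: X)
  case 0
  then have "X = W"
    using finite_subset_ground[of X] by auto
  with 0 show ?case by auto
next
  case (Suc n)
  show ?case
  proof (cases "f X = K")
    case True
    with Suc.prems show ?thesis by auto
  next
    case False
    then have "X \<noteq> W"
      using Suc.prems by auto
    then obtain z where z: "z \<in> X - W"
      using Suc.prems(1) by blast
    have "Suc (card ((X - W) - {z})) = card (X - W)"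
      using z finite_subset_ground[OF Suc.prems(2)] by (intro card_Suc_Diff1) auto
    moreover have "(X - W) - {z} = (X - {z}) - W"
      by auto
    ultimately have "n = card ((X - {z}) - W)"
      using Suc.hyps(2) by simp
    moreover have "K \<le> f (X - {z})"
      using remove_le[of X z] Suc.prems False z by auto
    ultimately obtain Y where "W \<subseteq> Y" "Y \<subseteq> X - {z}" "f Y = K"
      using Suc.hyps(1)[of "X - {z}"] Suc.prems z by auto
    then show ?thesis by auto
  qed
qed

lemma level_circuit_proper_subset_less:
  assumes "level_circuit k C" "1 \<le> k" "D \<subset> C" "D \<noteq> {}"
  shows "f D < k"
proof (rule ccontr)
  assume "\<not> f D < k"
  then have "k \<le> f D"
    by simp
  obtain e where e: "e \<in> D"
    using assms(4) by blast
  have "D \<subseteq> S"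
    using assms(1,3) unfolding level_circuit_def by blast
  with e have "f {e} \<le> k"
    using singleton_le_1[of e] assms(2) by force
  then obtain Y where Y: "{e} \<subseteq> Y" "Y \<subseteq> D" "f Y = k"
    using intermediate_value[of "{e}" D k] e \<open>D \<subseteq> S\<close> \<open>k \<le> f D\<close> by blast
  then have "Y \<subset> C" "Y \<noteq> {}"
    using assms(3) by auto
  with assms(1) \<open>f Y = k\<close> show False
    unfolding level_circuit_def by blast
qed

lemma rigid_level_circuit:
  assumes "C \<subseteq> S" "C \<noteq> {}" "rigid C"
  shows "level_circuit (f C) C"
  using assms unfolding level_circuit_def rigid_def by (simp add: less_le)

lemma rigid_maximiser_exists:
  assumes "X \<subseteq> S"
  shows "\<exists>C. rigid_maximiser X C"
proof -
  define m where "m = Max (f ` Pow X)"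
  have fin: "finite (Pow X)"
    using finite_subset_ground[OF assms] by simp
  then have bound: "\<forall>Y\<subseteq>X. f Y \<le> m"
    unfolding m_def by auto
  have "m \<in> f ` Pow X"
    unfolding m_def using fin by (intro Max_in) auto
  then have "{C\<in>Pow X. f C = m} \<noteq> {}"
    by auto
  then obtain C where C: "C \<subseteq> X" "f C = m"
    and minimal: "\<forall>B\<in>{C\<in>Pow X. f C = m}. B \<subseteq> C \<longrightarrow> C = B"
    using finite_has_minimal[of "{C\<in>Pow X. f C = m}"] fin by auto
  \<comment> \<open>a maximiser of \<open>f\<close> that is inclusion-minimal among maximisers is rigid\<close>
  have "rigid C"
    unfolding rigid_def
  proof (intro allI impI)
    fix Y
    assume "Y \<subset> C"
    with C minimal have "f Y \<noteq> m"
      by blast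
    moreover have "f Y \<le> m"
      using bound \<open>Y \<subset> C\<close> C(1) by auto
    ultimately show "f Y < f C"
      using C(2) by simp
  qed
  with C bound show ?thesis
    unfolding rigid_maximiser_def by auto
qed

lemma rigid_maximiser_delete_value:
  assumes "A \<subseteq> S" "rigid A" "z \<in> A" "rigid_maximiser (A - {z}) C"
  shows "f C = f A - 1"
proof -
  have "f A - 1 \<le> f (A - {z})"
    using remove_le[OF assms(1,3)] by simp
  also have "\<dots> \<le> f C"
    using assms(4) unfolding rigid_maximiser_def by blast
  finally have "f A - 1 \<le> f C" .
  moreover have "C \<subset> A"
    using assms(3,4) unfolding rigid_maximiser_def by blast
  then have "f C < f A"
    using assms(2) unfolding rigid_def by blast
  ultimately show ?thesis
    by simp
qed

lemma rigid_maximiser_swap: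
  assumes "A \<subseteq> S" "rigid A" "z \<in> A" "w \<in> A"
    and C: "rigid_maximiser (A - {z}) C" and B: "rigid_maximiser (A - {w}) B" "z \<in> B"
  shows "w \<in> C"
proof (rule ccontr)
  assume "w \<notin> C"
  have sub: "C \<subseteq> A - {z}" "B \<subseteq> A - {w}"
    using C B(1) unfolding rigid_maximiser_def by auto
  have "C \<union> B \<subseteq> A - {w}"
    using sub \<open>w \<notin> C\<close> by auto
  then have "f (C \<union> B) \<le> f B"
    using B(1) unfolding rigid_maximiser_def by blast
  moreover have "C \<inter> B \<subset> B"
    using sub(1) B(2) by auto
  then have "f (C \<inter> B) < f B"
    using B(1) unfolding rigid_maximiser_def rigid_def by blast
  moreover have "f C + f B \<le> f (C \<union> B) + f (C \<inter> B)"
    using sub assms(1) by (intro supermodular) auto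
  moreover have "f B = f C"
    using rigid_maximiser_delete_value[OF assms(1,2,3) C] rigid_maximiser_delete_value[OF assms(1,2,4) B(1)] by simp
  ultimately show False
    by linarith
qed

theorem rigid_pair_in_level_circuit:
  assumes "2 \<le> k" "A \<subseteq> S" "rigid A" "k \<le> f A" "x \<in> A" "y \<in> A"
  shows "\<exists>C. level_circuit k C \<and> x \<in> C \<and> y \<in> C"
  using assms(2-)
proof (induction "card A" arbitrary: A rule: less_induct)
  case less
  have core: "\<exists>C. rigid_maximiser (A - {z}) C" for z
    using rigid_maximiser_exists[of "A - {z}"] less.prems(1) by auto
  show ?case
  proof (cases "f A = k")
    case True
    then show ?thesis
      using rigid_level_circuit[of A] less.prems by auto
  next
    case False
    obtain Cx Cy where Cx: "rigid_maximiser (A - {x}) Cx" and Cy: "rigid_maximiser (A - {y}) Cy"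
      using core by blast
    have fCx: "f Cx = f A - 1" and fCy: "f Cy = f A - 1"
      using rigid_maximiser_delete_value[OF less.prems(1,2,4) Cx] rigid_maximiser_delete_value[OF less.prems(1,2,5) Cy]
      by auto
    have sub: "Cx \<subseteq> A - {x}" "Cy \<subseteq> A - {y}"
      using Cx Cy unfolding rigid_maximiser_def by auto
    then have "f (Cx \<union> Cy) \<le> f A"
      by (intro rigid_le[OF less.prems(2)]) auto
    moreover have "f Cx + f Cy \<le> f (Cx \<union> Cy) + f (Cx \<inter> Cy)"
      using sub less.prems(1) by (intro supermodular) auto
    \<comment> \<open>\<open>f (Cx \<inter> Cy) \<ge> 2 (f A - 1) - f A \<ge> k - 1 \<ge> 1\<close>; this is where \<open>k \<ge> 2\<close> is needed\<close>
    ultimately have "f (Cx \<inter> Cy) \<noteq> f {}"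
      using fCx fCy False less.prems(3) assms(1) empty_eq_0 by linarith
    then obtain z where z: "z \<in> Cx" "z \<in> Cy"
      by (metis disjoint_iff)
    then have "z \<in> A"
      using sub by auto
    obtain C where C: "rigid_maximiser (A - {z}) C"
      using core by blast
    have "x \<in> C" "y \<in> C"
      using rigid_maximiser_swap[OF less.prems(1,2) \<open>z \<in> A\<close> less.prems(4) C Cx z(1)]
        rigid_maximiser_swap[OF less.prems(1,2) \<open>z \<in> A\<close> less.prems(5) C Cy z(2)] by auto
    have "C \<subset> A" "rigid C"
      using C \<open>z \<in> A\<close> unfolding rigid_maximiser_def by auto
    then have "card C < card A" "C \<subseteq> S"
      using finite_subset_ground[OF less.prems(1)] less.prems(1) by (auto intro: psubset_card_mono)
    moreover have "k \<le> f C"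
      using rigid_maximiser_delete_value[OF less.prems(1,2) \<open>z \<in> A\<close> C] False less.prems(3) by simp
    ultimately show ?thesis
      using less.hyps \<open>rigid C\<close> \<open>x \<in> C\<close> \<open>y \<in> C\<close> by blast
  qed
qed

end

lemma connected_matroid_element_in_circuit:
  assumes "connected_matroid S \<C>" "x \<in> S"
  shows "\<exists>C\<in>\<C>. x \<in> C"
proof -
  have "\<not> S \<subseteq> {x}"
  proof
    assume "S \<subseteq> {x}"
    then have "card S \<le> 1"
      using card_mono[of "{x}" S] by simp
    with assms(1) show False
      unfolding connected_matroid_def by simp
  qed
  then obtain y where "y \<in> S" "y \<noteq> x"
    by blast
  with assms show ?thesis
    unfolding connected_matroid_def by blast
qed

lemma m_basis_subset: "m_basis S \<C> B \<Longrightarrow> B \<subseteq> S"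
  by (simp add: m_basis_def m_indep_def)

lemma m_basis_exists:
  assumes "finite S" "{} \<notin> \<C>"
  shows "\<exists>B. m_basis S \<C> B"
proof -
  have "{X. m_indep S \<C> X} \<subseteq> Pow S"
    by (auto simp: m_indep_def)
  then have "finite {X. m_indep S \<C> X}"
    using assms(1) by (simp add: finite_subset)
  moreover have "m_indep S \<C> {}"
    using assms(2) unfolding m_indep_def by auto
  ultimately obtain B where "m_indep S \<C> B" "\<forall>X. m_indep S \<C> X \<longrightarrow> B \<subseteq> X \<longrightarrow> B = X"
    using finite_has_maximal[of "{X. m_indep S \<C> X}"] by blast
  then show ?thesis
    unfolding m_basis_def by blast
qed

lemma m_cocircuit_exists:
  assumes "finite S" "{} \<notin> \<C>" "x \<in> S" "{x} \<notin> \<C>"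
  shows "\<exists>D. m_cocircuit S \<C> D"
proof -
  define T where "T = {D. D \<subseteq> S \<and> D \<noteq> {} \<and> (\<forall>B. m_basis S \<C> B \<longrightarrow> D \<inter> B \<noteq> {})}"
  have "m_indep S \<C> {x}"
    using assms(2-4) unfolding m_indep_def by (auto simp: subset_singleton_iff)
  then have "B \<noteq> {}" if "m_basis S \<C> B" for B
    using that unfolding m_basis_def by auto
  then have "S \<in> T"
    using assms(3) m_basis_subset unfolding T_def by fastforce
  moreover have "T \<subseteq> Pow S"
    unfolding T_def by auto
  then have "finite T"
    using assms(1) by (simp add: finite_subset)
  ultimately obtain D where D: "D \<in> T" and minimal: "\<forall>D'\<in>T. D' \<subseteq> D \<longrightarrow> D = D'"
    using finite_has_minimal[of T] by blast
  have "\<exists>B. m_basis S \<C> B \<and> D' \<inter> B = {}" if "D' \<subset> D" for D'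
  proof (cases "D' = {}")
    case True
    then show ?thesis
      using m_basis_exists[OF assms(1,2)] by blast
  next
    case False
    with that minimal D have "D' \<notin> T"
      by blast
    moreover have "D' \<subseteq> S"
      using that D unfolding T_def by blast
    ultimately show ?thesis
      using False unfolding T_def by blast
  qed
  with D show ?thesis
    unfolding m_cocircuit_def T_def by (intro exI[of _ D]) blast
qed

definition excess :: "('e \<Rightarrow> 'v set) \<Rightarrow> 'e set \<Rightarrow> int" where
  "excess inc X = int (card X) - int (card (verts inc X))"

text \<open>The number of ends of \<open>e\<close> at each vertex of \<open>e\<close>.\<close>

definition end_weight :: "('e \<Rightarrow> 'v set) \<Rightarrow> 'e \<Rightarrow> nat" where
  "end_weight inc e = (if is_loop inc e then 2 else 1)"

abbreviation edge_adj :: "('e \<Rightarrow> 'v set) \<Rightarrow> 'e set \<Rightarrow> ('e \<times> 'e) set" where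
  "edge_adj inc F \<equiv> {(a, b). a \<in> F \<and> b \<in> F \<and> inc a \<inter> inc b \<noteq> {}}"

definition edge_component :: "'e set \<Rightarrow> ('e \<Rightarrow> 'v set) \<Rightarrow> 'e \<Rightarrow> 'e set" where
  "edge_component E inc e = {b. (e, b) \<in> (edge_adj inc E)\<^sup>*}"

lemma verts_Un: "verts inc (A \<union> B) = verts inc A \<union> verts inc B"
  by (auto simp: verts_def)

lemma verts_mono: "A \<subseteq> B \<Longrightarrow> verts inc A \<subseteq> verts inc B"
  by (auto simp: verts_def)

lemma degree_eq_sum:
  assumes "finite R"
  shows "degree R inc v = (\<Sum>e\<in>R. if v \<in> inc e then end_weight inc e else 0)"
proof -
  have card_eq: "card {e\<in>R. P e} = (\<Sum>e\<in>R. if P e then 1 else 0)" for P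
    using assms by (simp flip: sum.inter_filter)
  have "(\<Sum>e\<in>R. if v \<in> inc e then end_weight inc e else 0) =
     (\<Sum>e\<in>R. (if v \<in> inc e \<and> \<not> is_loop inc e then 1 else 0)
            + 2 * (if v \<in> inc e \<and> is_loop inc e then 1 else 0))"
    by (rule sum.cong) (auto simp: end_weight_def)
  also have "\<dots> = degree R inc v"
    unfolding degree_def card_eq by (simp add: sum.distrib sum_distrib_left)
  finally show ?thesis ..
qed

lemma sum_degree_eq_sum_ends:
  assumes "finite R" "finite N"
  shows "(\<Sum>v\<in>N. degree R inc v) = (\<Sum>e\<in>R. end_weight inc e * card (N \<inter> inc e))"
proof -
  have "(\<Sum>v\<in>N. degree R inc v) = (\<Sum>e\<in>R. \<Sum>v\<in>N. if v \<in> inc e then end_weight inc e else 0)"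
    using assms(1) by (simp add: degree_eq_sum sum.swap[of _ N])
  also have "\<dots> = (\<Sum>e\<in>R. end_weight inc e * card (N \<inter> inc e))"
    using assms(2) by (simp add: sum.inter_filter[symmetric] Int_def mult.commute)
  finally show ?thesis .
qed

lemma degree_mono: "finite F \<Longrightarrow> R \<subseteq> F \<Longrightarrow> degree R inc v \<le> degree F inc v"
  by (simp add: degree_eq_sum sum_mono2 finite_subset)

lemma degree_eq_if_incident_edges_in:
  assumes "R \<subseteq> F" "\<forall>e\<in>F. v \<in> inc e \<longrightarrow> e \<in> R"
  shows "degree R inc v = degree F inc v"
proof -
  have "{e\<in>R. v \<in> inc e \<and> P e} = {e\<in>F. v \<in> inc e \<and> P e}" for P
    using assms by auto
  then show ?thesis
    unfolding degree_def by simp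
qed

lemma edge_component_subset_closed:
  assumes "e \<in> R" "\<forall>a\<in>E. \<forall>b\<in>R. inc a \<inter> inc b \<noteq> {} \<longrightarrow> a \<in> R"
  shows "edge_component E inc e \<subseteq> R"
proof
  fix b
  assume "b \<in> edge_component E inc e"
  then have "(e, b) \<in> (edge_adj inc E)\<^sup>*"
    unfolding edge_component_def by simp
  then show "b \<in> R"
    by induction (use assms in \<open>auto simp: Int_commute\<close>)
qed

lemma is_component_edge_component:
  assumes "e \<in> E"
  shows "is_component E inc (edge_component E inc e)"
proof -
  define F where "F = edge_component E inc e"
  have closed: "a \<in> F" if "a \<in> E" "b \<in> F" "inc a \<inter> inc b \<noteq> {}" for a b
  proof -
    have "b \<in> E"
      using \<open>b \<in> F\<close> assms unfolding F_def edge_component_def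
      by (auto elim: rtranclE)
    with that have "(b, a) \<in> edge_adj inc E"
      by auto
    with \<open>b \<in> F\<close> show ?thesis
      unfolding F_def edge_component_def by (simp add: rtrancl_into_rtrancl)
  qed
  have "F \<subseteq> E"
    using assms unfolding F_def edge_component_def by (auto elim: rtranclE)
  have from_e: "(e, b) \<in> (edge_adj inc F)\<^sup>*" if "b \<in> F" for b
  proof -
    have "(e, b) \<in> (edge_adj inc E)\<^sup>*"
      using that unfolding F_def edge_component_def by simp
    then show ?thesis
    proof induction
      case (step a c)
      then have "a \<in> F" "c \<in> F"
        unfolding F_def edge_component_def by (auto intro: rtrancl_into_rtrancl)
      with step show ?case
        by (auto intro: rtrancl_into_rtrancl)
    qed simp
  qed
  have "sym ((edge_adj inc F)\<^sup>*)"
    by (rule sym_rtrancl) (auto simp: sym_def)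
  then have "(a, b) \<in> (edge_adj inc F)\<^sup>*" if "a \<in> F" "b \<in> F" for a b
    using from_e[OF that(1)] from_e[OF that(2)] by (meson rtrancl_trans symD)
  moreover have "e \<in> F"
    unfolding F_def edge_component_def by simp
  moreover have "inc a \<inter> verts inc F = {}" if "a \<in> E - F" for a
    using closed that unfolding verts_def by blast
  ultimately show ?thesis
    using \<open>F \<subseteq> E\<close> unfolding F_def is_component_def edge_connected_def by blast
qed

lemma closed_2_regular_edges_contain_cycle_component:
  assumes "R \<subseteq> E" "e \<in> R" "\<forall>a\<in>E. \<forall>b\<in>R. inc a \<inter> inc b \<noteq> {} \<longrightarrow> a \<in> R"
    and "\<forall>v\<in>verts inc R. degree E inc v = 2"
  shows "\<exists>F. is_component E inc F \<and> is_cycle_graph inc F"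
proof -
  define F where "F = edge_component E inc e"
  have comp: "is_component E inc F"
    unfolding F_def using assms(1,2) by (intro is_component_edge_component) auto
  have "F \<subseteq> R"
    unfolding F_def using assms(2,3) by (rule edge_component_subset_closed)
  have "degree F inc v = 2" if "v \<in> verts inc F" for v
  proof -
    have "\<forall>a\<in>E. v \<in> inc a \<longrightarrow> a \<in> F"
      using comp that unfolding is_component_def by blast
    then have "degree F inc v = degree E inc v"
      using comp unfolding is_component_def by (intro degree_eq_if_incident_edges_in) auto
    moreover have "v \<in> verts inc R"
      using that verts_mono[OF \<open>F \<subseteq> R\<close>, of inc] by blast
    ultimately show ?thesis
      using assms(4) by simp
  qed
  with comp show ?thesis
    unfolding is_cycle_graph_def is_component_def by blast
qed

locale finite_graph =
  fixes E :: "'e set" and inc :: "'e \<Rightarrow> 'v set"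
  assumes graph: "graph E inc"
begin

lemma finite_edges: "finite E"
  using graph by (simp add: graph_def)

lemma card_inc: "e \<in> E \<Longrightarrow> card (inc e) = 1 \<or> card (inc e) = 2"
  using graph by (simp add: graph_def)

lemma inc_finite: "e \<in> E \<Longrightarrow> finite (inc e)"
  using card_inc card.infinite by fastforce

lemma inc_nonempty: "e \<in> E \<Longrightarrow> inc e \<noteq> {}"
  using card_inc by fastforce

lemma finite_verts: "X \<subseteq> E \<Longrightarrow> finite (verts inc X)"
  unfolding verts_def using inc_finite finite_edges finite_subset by blast

lemma excess_supermodular:
  assumes "A \<subseteq> E" "B \<subseteq> E"
  shows "excess inc A + excess inc B \<le> excess inc (A \<union> B) + excess inc (A \<inter> B)"
proof -
  have "finite A" "finite B"
    using assms finite_edges finite_subset by auto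
  then have edges: "card (A \<union> B) + card (A \<inter> B) = card A + card B"
    by (metis card_Un_Int)
  have "finite (verts inc A)" "finite (verts inc B)"
    using assms finite_verts by auto
  then have vertices: "card (verts inc A \<union> verts inc B) + card (verts inc A \<inter> verts inc B)
      = card (verts inc A) + card (verts inc B)"
    by (metis card_Un_Int)
  have "verts inc (A \<inter> B) \<subseteq> verts inc A \<inter> verts inc B"
    by (auto simp: verts_def)
  then have "card (verts inc (A \<inter> B)) \<le> card (verts inc A \<inter> verts inc B)"
    using \<open>finite (verts inc A)\<close> by (simp add: card_mono)
  then show ?thesis
    unfolding excess_def verts_Un using edges vertices by linarith
qed

lemma excess_remove_le:
  assumes "X \<subseteq> E" "z \<in> X"
  shows "excess inc X \<le> excess inc (X - {z}) + 1"
proof -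
  have "card (X - {z}) = card X - 1" "card X \<ge> 1"
    using assms finite_edges finite_subset by (auto simp: card_gt_0_iff Suc_le_eq)
  moreover have "card (verts inc (X - {z})) \<le> card (verts inc X)"
    using finite_verts[OF assms(1)] verts_mono[of "X - {z}" X inc] by (simp add: card_mono)
  ultimately show ?thesis
    unfolding excess_def by linarith
qed

sublocale unit_supermodular E "excess inc"
proof
  show "excess inc {} = 0"
    by (simp add: excess_def verts_def)
qed (simp_all add: finite_edges excess_supermodular excess_remove_le)

lemma Mk_circuits_eq: "Mk_circuits k E inc = {C. level_circuit (int k) C}"
proof -
  have "card D = card (verts inc D) + k \<longleftrightarrow> excess inc D = int k" for D
    unfolding excess_def by auto
  then show ?thesis
    unfolding Mk_circuits_def level_circuit_def by auto
qed

lemma excess_Un_disjoint_verts: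
  assumes "A \<subseteq> E" "B \<subseteq> E" "verts inc A \<inter> verts inc B = {}"
  shows "excess inc (A \<union> B) = excess inc A + excess inc B"
proof -
  have "A \<inter> B = {}"
  proof (rule ccontr)
    assume "A \<inter> B \<noteq> {}"
    then obtain e where "e \<in> A" "e \<in> B"
      by blast
    moreover obtain v where "v \<in> inc e"
      using inc_nonempty \<open>e \<in> A\<close> assms(1) by blast
    ultimately show False
      using assms(3) unfolding verts_def by blast
  qed
  then have "card (A \<union> B) = card A + card B"
    using assms finite_edges finite_subset by (intro card_Un_disjoint) auto
  moreover have "card (verts inc (A \<union> B)) = card (verts inc A) + card (verts inc B)"
    unfolding verts_Un using assms finite_verts by (intro card_Un_disjoint) auto
  ultimately show ?thesis
    unfolding excess_def by simp
qed

lemma end_weight_card: "e \<in> E \<Longrightarrow> end_weight inc e * card (inc e) = 2"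
  using card_inc by (auto simp: end_weight_def is_loop_def)

lemma not_leaf_degree_ge_2:
  assumes "\<not> is_leaf E inc v" "v \<in> verts inc E"
  shows "2 \<le> degree E inc v"
proof (cases "\<exists>e\<in>E. v \<in> inc e \<and> is_loop inc e")
  case True
  then have "{e\<in>E. v \<in> inc e \<and> is_loop inc e} \<noteq> {}"
    by blast
  then have "card {e\<in>E. v \<in> inc e \<and> is_loop inc e} \<ge> 1"
    using finite_edges by (simp add: Suc_le_eq card_gt_0_iff)
  then show ?thesis
    unfolding degree_def by linarith
next
  case False
  obtain e where e: "e \<in> E" "v \<in> inc e"
    using assms(2) unfolding verts_def by auto
  with False have "\<not> is_loop inc e"
    by blast
  with assms(1) e obtain e' where e': "e' \<in> E" "v \<in> inc e'" "e' \<noteq> e"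
    unfolding is_leaf_def by blast
  with e False have "{e, e'} \<subseteq> {e\<in>E. v \<in> inc e \<and> \<not> is_loop inc e}"
    by blast
  then have "card {e, e'} \<le> card {e\<in>E. v \<in> inc e \<and> \<not> is_loop inc e}"
    using finite_edges by (intro card_mono) auto
  with e' show ?thesis
    unfolding degree_def by simp
qed

lemma tight_degree_count:
  assumes "R \<subseteq> E" "finite N" "\<forall>v\<in>N. 2 \<le> degree R inc v" "card R \<le> card N"
  shows "\<forall>e\<in>R. inc e \<subseteq> N" and "\<forall>v\<in>N. degree R inc v = 2"
proof -
  let ?ends = "\<lambda>e. end_weight inc e * card (N \<inter> inc e)"
  have "finite R"
    using assms(1) finite_edges finite_subset by blast
  have ends_le: "?ends e \<le> 2" if "e \<in> R" for e
  proof -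
    have "card (N \<inter> inc e) \<le> card (inc e)"
      using that assms(1) inc_finite by (intro card_mono) auto
    then show ?thesis
      using end_weight_card[of e] that assms(1) mult_le_mono2 by (metis subsetD)
  qed
  have "(\<Sum>v\<in>N. 2) \<le> (\<Sum>v\<in>N. degree R inc v)"
    using assms(3) by (intro sum_mono) auto
  moreover have "(\<Sum>v\<in>N. degree R inc v) = (\<Sum>e\<in>R. ?ends e)"
    using \<open>finite R\<close> assms(2) by (rule sum_degree_eq_sum_ends)
  moreover have "(\<Sum>e\<in>R. ?ends e) \<le> (\<Sum>e\<in>R. 2)"
    using ends_le by (intro sum_mono) auto
  moreover have "(\<Sum>e\<in>R. 2) \<le> (\<Sum>v\<in>N. (2::nat))"
    using assms(4) by simp
  ultimately have sums: "(\<Sum>v\<in>N. 2) = (\<Sum>v\<in>N. degree R inc v)" "(\<Sum>e\<in>R. ?ends e) = (\<Sum>e\<in>R. 2)"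
    by linarith+
  show "\<forall>v\<in>N. degree R inc v = 2"
    using sum_mono_inv[OF sums(1)] assms(2,3) by fastforce
  show "\<forall>e\<in>R. inc e \<subseteq> N"
  proof
    fix e
    assume "e \<in> R"
    then have "?ends e = end_weight inc e * card (inc e)"
      using sum_mono_inv[OF sums(2)] ends_le \<open>finite R\<close> end_weight_card assms(1) by auto
    then have "card (N \<inter> inc e) = card (inc e)"
      by (simp add: end_weight_def split: if_splits)
    then have "N \<inter> inc e = inc e"
      using \<open>e \<in> R\<close> assms(1) inc_finite by (intro card_subset_eq) auto
    then show "inc e \<subseteq> N"
      by blast
  qed
qed

lemma excess_nonpos_in_2_regular:
  assumes "C \<subseteq> F" "F \<subseteq> E" "\<forall>v\<in>verts inc F. degree F inc v = 2"
  shows "excess inc C \<le> 0"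
proof -
  have "C \<subseteq> E"
    using assms(1,2) by blast
  then have fin: "finite C" "finite (verts inc C)"
    using finite_edges finite_subset finite_verts by auto
  have "end_weight inc e * card (verts inc C \<inter> inc e) = 2" if "e \<in> C" for e
  proof -
    have "verts inc C \<inter> inc e = inc e"
      using that unfolding verts_def by blast
    then show ?thesis
      using end_weight_card \<open>C \<subseteq> E\<close> that by auto
  qed
  then have "2 * card C = (\<Sum>e\<in>C. end_weight inc e * card (verts inc C \<inter> inc e))"
    by simp
  also have "\<dots> = (\<Sum>v\<in>verts inc C. degree C inc v)"
    using fin by (rule sum_degree_eq_sum_ends[symmetric])
  also have "\<dots> \<le> (\<Sum>v\<in>verts inc C. 2)"
  proof (rule sum_mono)
    fix v
    assume "v \<in> verts inc C"
    then have "v \<in> verts inc F"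
      using verts_mono[OF assms(1), of inc] by blast
    then show "degree C inc v \<le> 2"
      using degree_mono[OF _ assms(1)] assms(2,3) finite_edges finite_subset by metis
  qed
  finally show ?thesis
    unfolding excess_def by simp
qed

lemma cacti_graph_rigid:
  assumes "cacti_graph E inc"
  shows "rigid E"
  unfolding rigid_def
proof (intro allI impI)
  fix Y
  assume "Y \<subset> E"
  define R where "R = E - Y"
  define N where "N = verts inc E - verts inc Y"
  have "R \<subseteq> E" "R \<noteq> {}" "finite N"
    using \<open>Y \<subset> E\<close> finite_verts unfolding R_def N_def by auto
  have incident_in_R: "a \<in> R" if "a \<in> E" "v \<in> N" "v \<in> inc a" for a v
    using that unfolding R_def N_def verts_def by auto
  then have degree_N: "degree R inc v = degree E inc v" if "v \<in> N" for v
    using that \<open>R \<subseteq> E\<close> by (intro degree_eq_if_incident_edges_in) auto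
  have degree_ge_2: "\<forall>v\<in>N. 2 \<le> degree R inc v"
    using not_leaf_degree_ge_2 assms degree_N unfolding cacti_graph_def N_def by auto
  show "excess inc Y < excess inc E"
  proof (rule ccontr)
    assume "\<not> excess inc Y < excess inc E"
    moreover have "E = Y \<union> R" "Y \<inter> R = {}"
      using \<open>Y \<subset> E\<close> unfolding R_def by auto
    then have "card E = card Y + card R"
      using finite_edges by (metis card_Un_disjoint finite_Un)
    moreover have "verts inc E = verts inc Y \<union> N" "verts inc Y \<inter> N = {}"
      using verts_mono[of Y E inc] \<open>Y \<subset> E\<close> unfolding N_def by auto
    then have "card (verts inc E) = card (verts inc Y) + card N"
      using finite_verts[of E] by (metis card_Un_disjoint finite_Un order_refl)
    ultimately have "card R \<le> card N"
      unfolding excess_def by linarith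
    note tight = tight_degree_count[OF \<open>R \<subseteq> E\<close> \<open>finite N\<close> degree_ge_2 this]
    obtain e where "e \<in> R"
      using \<open>R \<noteq> {}\<close> by blast
    moreover have "\<forall>a\<in>E. \<forall>b\<in>R. inc a \<inter> inc b \<noteq> {} \<longrightarrow> a \<in> R"
      using tight(1) incident_in_R by blast
    moreover have "\<forall>v\<in>verts inc R. degree E inc v = 2"
      using tight degree_N unfolding verts_def by fastforce
    ultimately show False
      using closed_2_regular_edges_contain_cycle_component[OF \<open>R \<subseteq> E\<close>] assms
      unfolding cacti_graph_def by blast
  qed
qed

text \<open>Deleting the only edge at \<open>v\<close> from a circuit also deletes the vertex \<open>v\<close>,
  so the excess does not drop.\<close>

lemma leaf_edge_not_in_level_circuit:
  assumes "{a\<in>E. v \<in> inc a} = {e}" "2 \<le> k" "level_circuit k C"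
  shows "e \<notin> C"
proof
  assume "e \<in> C"
  have "C \<subseteq> E" "excess inc C = k"
    using assms(3) unfolding level_circuit_def by auto
  show False
  proof (cases "C = {e}")
    case True
    with \<open>excess inc C = k\<close> assms(2) \<open>C \<subseteq> E\<close> show False
      using singleton_le_1[of e] by auto
  next
    case False
    define D where "D = C - {e}"
    have "D \<subset> C" "D \<noteq> {}"
      using \<open>e \<in> C\<close> False unfolding D_def by auto
    have "v \<in> verts inc C"
      using assms(1) \<open>e \<in> C\<close> unfolding verts_def by blast
    moreover have "verts inc D \<subseteq> verts inc C - {v}"
      using assms(1) \<open>C \<subseteq> E\<close> unfolding D_def verts_def by blast
    ultimately have "card (verts inc D) < card (verts inc C)"
      using finite_verts[OF \<open>C \<subseteq> E\<close>] card_mono[of "verts inc C - {v}" "verts inc D"]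
        card_Diff1_less[of "verts inc C" v] by simp
    moreover have "Suc (card D) = card C"
      unfolding D_def using \<open>e \<in> C\<close> \<open>C \<subseteq> E\<close> finite_edges finite_subset
      by (intro card_Suc_Diff1) auto
    ultimately have "k \<le> excess inc D"
      using \<open>excess inc C = k\<close> unfolding excess_def by linarith
    with level_circuit_proper_subset_less[OF assms(3) _ \<open>D \<subset> C\<close> \<open>D \<noteq> {}\<close>] assms(2)
    show False
      by linarith
  qed
qed

text \<open>The excess is additive over a component and its complement, so the part of the circuit
  outside \<open>F\<close> would already have excess \<open>k\<close>.\<close>

lemma level_circuit_disjoint_component:
  assumes "is_component E inc F" "\<forall>X\<subseteq>F. excess inc X \<le> 0" "1 \<le> k" "level_circuit k C"
  shows "C \<inter> F = {}"
proof (rule ccontr)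
  assume "C \<inter> F \<noteq> {}"
  have "C \<subseteq> E" "excess inc C = k"
    using assms(4) unfolding level_circuit_def by auto
  have "verts inc (C \<inter> F) \<inter> verts inc (C - F) = {}"
    using assms(1) \<open>C \<subseteq> E\<close> unfolding is_component_def verts_def by blast
  then have "excess inc ((C \<inter> F) \<union> (C - F)) = excess inc (C \<inter> F) + excess inc (C - F)"
    using \<open>C \<subseteq> E\<close> by (intro excess_Un_disjoint_verts) auto
  moreover have "(C \<inter> F) \<union> (C - F) = C"
    by blast
  moreover have "excess inc (C \<inter> F) \<le> 0"
    using assms(2) by blast
  ultimately have "k \<le> excess inc (C - F)"
    using \<open>excess inc C = k\<close> by simp
  moreover have "C - F \<noteq> {}"
  proof
    assume "C - F = {}"
    with \<open>k \<le> excess inc (C - F)\<close> assms(3) show False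
      using empty_eq_0 by simp
  qed
  then have "excess inc (C - F) < k"
    using level_circuit_proper_subset_less[OF assms(4,3)] \<open>C \<inter> F \<noteq> {}\<close> by blast
  ultimately show False
    by simp
qed

lemma connected_matroid_if_cacti_graph:
  assumes "2 \<le> k" "nontrivial_matroid E (Mk_circuits k E inc)" "cacti_graph E inc"
  shows "connected_matroid E (Mk_circuits k E inc)"
proof -
  obtain C where C: "level_circuit (int k) C"
    using assms(2) unfolding nontrivial_matroid_def Mk_circuits_eq by auto
  then have "C \<subseteq> E" "excess inc C = int k"
    unfolding level_circuit_def by auto
  have "rigid E"
    using assms(3) by (rule cacti_graph_rigid)
  then have "int k \<le> excess inc E"
    using rigid_le[OF _ \<open>C \<subseteq> E\<close>] \<open>excess inc C = int k\<close> by simp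
  have "k \<le> card C"
    using \<open>excess inc C = int k\<close> unfolding excess_def by linarith
  then have "2 \<le> card E"
    using assms(1) card_mono[OF finite_edges \<open>C \<subseteq> E\<close>] by linarith
  moreover have "\<exists>C\<in>Mk_circuits k E inc. x \<in> C \<and> y \<in> C" if "x \<in> E" "y \<in> E" for x y
    using rigid_pair_in_level_circuit[OF _ _ \<open>rigid E\<close> \<open>int k \<le> excess inc E\<close> that] assms(1)
    unfolding Mk_circuits_eq by auto
  ultimately show ?thesis
    using assms(2) unfolding connected_matroid_def nontrivial_matroid_def by blast
qed

lemma nontrivial_matroid_if_connected:
  assumes "2 \<le> k" "connected_matroid E (Mk_circuits k E inc)"
  shows "nontrivial_matroid E (Mk_circuits k E inc)"
proof -
  have matroid: "matroid_circuits E (Mk_circuits k E inc)"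
    using assms(2) unfolding connected_matroid_def by blast
  obtain x where "x \<in> E"
    using assms(2) unfolding connected_matroid_def by fastforce
  then have "Mk_circuits k E inc \<noteq> {}"
    using connected_matroid_element_in_circuit[OF assms(2)] by blast
  moreover have "{x} \<notin> Mk_circuits k E inc"
    using singleton_le_1[OF \<open>x \<in> E\<close>] assms(1) unfolding Mk_circuits_eq level_circuit_def by auto
  then have "\<exists>D. m_cocircuit E (Mk_circuits k E inc) D"
    using matroid \<open>x \<in> E\<close> unfolding matroid_circuits_def by (intro m_cocircuit_exists) auto
  ultimately show ?thesis
    using matroid unfolding nontrivial_matroid_def by blast
qed

lemma cacti_graph_if_connected_matroid:
  assumes "2 \<le> k" "connected_matroid E (Mk_circuits k E inc)"
  shows "cacti_graph E inc"
proof -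
  have in_circuit: "\<exists>C. level_circuit (int k) C \<and> e \<in> C" if "e \<in> E" for e
    using connected_matroid_element_in_circuit[OF assms(2) that] unfolding Mk_circuits_eq by auto
  have "\<not> is_leaf E inc v" for v
  proof
    assume "is_leaf E inc v"
    then obtain e where "e \<in> E" "{a\<in>E. v \<in> inc a} = {e}"
      unfolding is_leaf_def by blast
    moreover obtain C where "level_circuit (int k) C" "e \<in> C"
      using in_circuit \<open>e \<in> E\<close> by blast
    ultimately show False
      using leaf_edge_not_in_level_circuit[of v e "int k" C] assms(1) by simp
  qed
  moreover have "\<not> is_cycle_graph inc F" if "is_component E inc F" for F
  proof
    assume "is_cycle_graph inc F"
    then have "\<forall>v\<in>verts inc F. degree F inc v = 2"
      unfolding is_cycle_graph_def by blast
    moreover have "F \<subseteq> E" "F \<noteq> {}"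
      using that unfolding is_component_def edge_connected_def by blast+
    ultimately have "\<forall>X\<subseteq>F. excess inc X \<le> 0"
      using excess_nonpos_in_2_regular by blast
    obtain e where "e \<in> F"
      using \<open>F \<noteq> {}\<close> by blast
    then obtain C where C: "level_circuit (int k) C" "e \<in> C"
      using in_circuit \<open>F \<subseteq> E\<close> by blast
    have "C \<inter> F = {}"
      using level_circuit_disjoint_component[OF that \<open>\<forall>X\<subseteq>F. excess inc X \<le> 0\<close> _ C(1)] assms(1)
      by simp
    with C(2) \<open>e \<in> F\<close> show False
      by blast
  qed
  ultimately show ?thesis
    unfolding cacti_graph_def by blast
qed

end

theorem mainTheorem13:
  fixes E :: "'e set" and inc :: "'e \<Rightarrow> 'v set" and k :: nat
  assumes "graph E inc" and "2 \<le> k"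
  shows "(nontrivial_matroid E (Mk_circuits k E inc) \<and> cacti_graph E inc)
         \<longleftrightarrow> connected_matroid E (Mk_circuits k E inc)"
proof -
  interpret finite_graph E inc
    using assms(1) by (rule finite_graph.intro)
  show ?thesis
    using connected_matroid_if_cacti_graph nontrivial_matroid_if_connected
      cacti_graph_if_connected_matroid assms(2) by blast
qed

end
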